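(* Let $V$ be a finite set and let $G$ be the group with presentation $\langle V \mid r_e,\ e\in E\rangle$, where $E$ is a finite index set and each relator has the form $r_e=\lambda_e p_e\lambda_e^{-1}q_e^{-1}$ with $\lambda_e,p_e,q_e\in V$. Assume the vertex link $L$ (defined in the context) has girth at least $4$ (no loops, no multiple edges, no triangles), and that the descending link $L^+$ and the ascending link $L^-$ are trees. Then for any pair of distinct letters $a,b\in V$, the vertex rim $\mathrm{vrim}(a,b)$ of the fan $\mathrm{Fan}(a,b)$ is a freely reduced word in the letters $V^{\pm1}$, and the edge rim $\mathrm{erim}(a,b)$ is a freely reduced word in the letters $\{x_e\}_{e\in E}^{\pm1}$.
   Context: Let $P$ be the presentation $2$-complex: one vertex, one oriented loop per generator, and for each relator $r_e$ one unit square glued along the word $r_e$. In the square of $r_e$, starting at the corner $B$ and reading $\lambda_e p_e\lambda_e^{-1}q_e^{-1}$, the edges are: $\lambda_e$ from $B$ to a corner $Q$, $p_e$ from $Q$ to a corner $T$, $\lambda_e$ from a corner $R$ to $T$, and $q_e$ from $B$ to $R$. Call $T$ the top corner (its two incoming edges, labeled $p_e$ and $\lambda_e$, are the top edges) and $B$ the bottom corner. The vertex link $L$ is the graph with vertex set $\{v^+,v^-: v\in V\}$ and, for each relator $e$, four edges: $\{p_e^+,\lambda_e^+\}$ (corner $T$), $\{\lambda_e^-,q_e^-\}$ (corner $B$), $\{\lambda_e^+,p_e^-\}$ (corner $Q$), $\{q_e^+,\lambda_e^-\}$ (corner $R$). The descending link $L^+$ is the full subgraph on $\{v^+\}$ and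 the ascending link $L^-$ the full subgraph on $\{v^-\}$. For $e\in E$ put $x_e=q_e^{-1}\lambda_e$ (a formal letter, also an element of $G$). Fan $\mathrm{Fan}(a,b)$ for distinct $a,b\in V$: let $a^+=v_0^+,v_1^+,\dots,v_k^+=b^+$ be the unique simple path in the tree $L^+$. For $1\le i\le k$ let $C_i$ be a copy of the square of the unique relator whose top edges are labeled $v_{i-1}$ and $v_i$. $\mathrm{Fan}(a,b)$ is obtained by identifying, for $1\le i<k$, the top edge of $C_i$ labeled $v_i$ with the top edge of $C_{i+1}$ labeled $v_i$. For each $i$, the bottom boundary path of $C_i$ from the initial vertex of its top edge labeled $v_{i-1}$ to the initial vertex of its top edge labeled $v_i$ reads a two-letter word, which is either $q_e^{-1}\lambda_e$ or $\lambda_e^{-1}q_e$ for the relator $e$ of $C_i$. The vertex rim $\mathrm{vrim}(a,b)$ is the concatenation of these two-letter words for $i=1,\dots,k$, and the edge rim $\mathrm{erim}(a,b)$ is the word obtained by replacing each $q_e^{-1}\lambda_e$ by $x_e$ and each $\lambda_e^{-1}q_e$ by $x_e^{-1}$. *)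

theory Defs
  imports Main
begin

text \<open>Signed letters: (x, True) is x, (x, False) is x^-1.
  A word is freely reduced if no two consecutive letters are mutually inverse.\<close>

definition freely_reduced :: "('a \<times> bool) list \<Rightarrow> bool" where
  "freely_reduced w \<longleftrightarrow>
     (\<forall>i. Suc i < length w \<longrightarrow>
        \<not> (fst (w ! i) = fst (w ! Suc i) \<and> snd (w ! i) \<noteq> snd (w ! Suc i)))"

text \<open>Corners of the square of a relator.\<close>
datatype corner = CT | CB | CQ | CR

text \<open>Vertices of the link: (v, True) = v^+, (v, False) = v^-.
  Edge of the link coming from corner c of the square of relator e.\<close>
definition link_edge ::
  "('e \<Rightarrow> 'v) \<Rightarrow> ('e \<Rightarrow> 'v) \<Rightarrow> ('e \<Rightarrow> 'v) \<Rightarrow> 'e \<Rightarrow> corner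
     \<Rightarrow> ('v \<times> bool) \<times> ('v \<times> bool)" where
  "link_edge lam p q e c = (case c of
      CT \<Rightarrow> ((p e, True), (lam e, True))
    | CB \<Rightarrow> ((lam e, False), (q e, False))
    | CQ \<Rightarrow> ((lam e, True), (p e, False))
    | CR \<Rightarrow> ((q e, True), (lam e, False)))"

definition link_adj ::
  "'e set \<Rightarrow> ('e \<Rightarrow> 'v) \<Rightarrow> ('e \<Rightarrow> 'v) \<Rightarrow> ('e \<Rightarrow> 'v)
     \<Rightarrow> 'v \<times> bool \<Rightarrow> 'v \<times> bool \<Rightarrow> bool" where
  "link_adj E lam p q x y \<longleftrightarrow>
     (\<exists>e\<in>E. \<exists>c. link_edge lam p q e c = (x, y) \<or> link_edge lam p q e c = (y, x))"

definition link_girth_ge_4 ::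
  "'e set \<Rightarrow> ('e \<Rightarrow> 'v) \<Rightarrow> ('e \<Rightarrow> 'v) \<Rightarrow> ('e \<Rightarrow> 'v) \<Rightarrow> bool" where
  "link_girth_ge_4 E lam p q \<longleftrightarrow>
     (\<forall>e\<in>E. \<forall>c. fst (link_edge lam p q e c) \<noteq> snd (link_edge lam p q e c)) \<and>
     (\<forall>e\<in>E. \<forall>c. \<forall>e'\<in>E. \<forall>c'. (e, c) \<noteq> (e', c') \<longrightarrow>
        {fst (link_edge lam p q e c), snd (link_edge lam p q e c)} \<noteq>
        {fst (link_edge lam p q e' c'), snd (link_edge lam p q e' c')}) \<and>
     \<not> (\<exists>x y z. x \<noteq> y \<and> y \<noteq> z \<and> x \<noteq> z \<and>
          link_adj E lam p q x y \<and> link_adj E lam p q y z \<and> link_adj E lam p q x z)"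

text \<open>Generic (simple) graph notions on a vertex set S with adjacency adj
  (the full subgraph on S).\<close>
definition walk_in :: "'a set \<Rightarrow> ('a \<Rightarrow> 'a \<Rightarrow> bool) \<Rightarrow> 'a list \<Rightarrow> bool" where
  "walk_in S adj xs \<longleftrightarrow> xs \<noteq> [] \<and> set xs \<subseteq> S \<and>
     (\<forall>i. Suc i < length xs \<longrightarrow> adj (xs ! i) (xs ! Suc i))"

definition graph_connected :: "'a set \<Rightarrow> ('a \<Rightarrow> 'a \<Rightarrow> bool) \<Rightarrow> bool" where
  "graph_connected S adj \<longleftrightarrow>
     (\<forall>x\<in>S. \<forall>y\<in>S. \<exists>xs. walk_in S adj xs \<and> hd xs = x \<and> last xs = y)"

definition graph_has_cycle :: "'a set \<Rightarrow> ('a \<Rightarrow> 'a \<Rightarrow> bool) \<Rightarrow> bool" where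
  "graph_has_cycle S adj \<longleftrightarrow>
     (\<exists>xs. 3 \<le> length xs \<and> distinct xs \<and> walk_in S adj xs \<and> adj (last xs) (hd xs))"

definition graph_is_tree :: "'a set \<Rightarrow> ('a \<Rightarrow> 'a \<Rightarrow> bool) \<Rightarrow> bool" where
  "graph_is_tree S adj \<longleftrightarrow> S \<noteq> {} \<and> graph_connected S adj \<and> \<not> graph_has_cycle S adj"

definition simple_path :: "'a set \<Rightarrow> ('a \<Rightarrow> 'a \<Rightarrow> bool) \<Rightarrow> 'a \<Rightarrow> 'a \<Rightarrow> 'a list \<Rightarrow> bool" where
  "simple_path S adj x y xs \<longleftrightarrow> walk_in S adj xs \<and> distinct xs \<and> hd xs = x \<and> last xs = y"

definition plus_verts :: "'v set \<Rightarrow> ('v \<times> bool) set" where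
  "plus_verts V = (\<lambda>v. (v, True)) ` V"

definition minus_verts :: "'v set \<Rightarrow> ('v \<times> bool) set" where
  "minus_verts V = (\<lambda>v. (v, False)) ` V"

text \<open>Bottom boundary word of the square of relator e, read from the initial vertex of
  the top edge labelled u to the initial vertex of the top edge labelled w.
  Top edge p_e starts at Q, top edge lam_e starts at R; the bottom path
  R -> B -> Q reads q_e^-1 lam_e, and Q -> B -> R reads lam_e^-1 q_e.\<close>
definition square_vword ::
  "('e \<Rightarrow> 'v) \<Rightarrow> ('e \<Rightarrow> 'v) \<Rightarrow> ('e \<Rightarrow> 'v) \<Rightarrow> 'e \<Rightarrow> 'v \<Rightarrow> 'v \<Rightarrow> ('v \<times> bool) list" where
  "square_vword lam p q e u w =
     (if u = lam e \<and> w = p e then [(q e, False), (lam e, True)]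
      else if u = p e \<and> w = lam e then [(lam e, False), (q e, True)]
      else [])"

definition square_eword ::
  "('e \<Rightarrow> 'v) \<Rightarrow> ('e \<Rightarrow> 'v) \<Rightarrow> 'e \<Rightarrow> 'v \<Rightarrow> 'v \<Rightarrow> ('e \<times> bool) list" where
  "square_eword lam p e u w =
     (if u = lam e \<and> w = p e then [(e, True)]
      else if u = p e \<and> w = lam e then [(e, False)]
      else [])"

text \<open>vrim / erim of the fan determined by the path vs = [v_0,...,v_k] in L^+
  and the relators es = [e_1,...,e_k] of the squares C_1,...,C_k.\<close>
definition vrim ::
  "('e \<Rightarrow> 'v) \<Rightarrow> ('e \<Rightarrow> 'v) \<Rightarrow> ('e \<Rightarrow> 'v) \<Rightarrow> 'v list \<Rightarrow> 'e list \<Rightarrow> ('v \<times> bool) list" where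
  "vrim lam p q vs es =
     concat (map (\<lambda>i. square_vword lam p q (es ! i) (vs ! i) (vs ! Suc i)) [0..<length es])"

definition erim ::
  "('e \<Rightarrow> 'v) \<Rightarrow> ('e \<Rightarrow> 'v) \<Rightarrow> 'v list \<Rightarrow> 'e list \<Rightarrow> ('e \<times> bool) list" where
  "erim lam p vs es =
     concat (map (\<lambda>i. square_eword lam p (es ! i) (vs ! i) (vs ! Suc i)) [0..<length es])"

end

theory Submission
  imports Defs
begin

text \<open>Consecutive labels on the simple path \<open>v\<^sub>0, \<dots>, v\<^sub>k\<close> in \<open>L\<^sup>+\<close> differ, so the square
  \<open>C\<^sub>i\<close> has \<open>(v\<^sub>i\<^sub>-\<^sub>1, v\<^sub>i) = (\<lambda>, p)\<close> or \<open>(p, \<lambda>)\<close> and contributes the block \<open>q\<^sup>-\<^sup>1\<lambda>\<close>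
  resp. \<open>\<lambda>\<^sup>-\<^sup>1q\<close> to the vertex rim; a block does not cancel because \<open>L\<close> has no loop at the
  corner \<open>B\<close>. A cancellation between the blocks of \<open>C\<^sub>i\<close> and \<open>C\<^sub>i\<^sub>+\<^sub>1\<close> either forces
  \<open>v\<^sub>i\<^sub>-\<^sub>1 = v\<^sub>i\<^sub>+\<^sub>1\<close>, impossible on a simple path, or makes two of the corners \<open>Q\<close>, \<open>R\<close>
  of the two squares span the same edge of \<open>L\<close>. In the edge rim each square contributes
  a single letter \<open>x\<^sub>e\<^sup>\<plusminus>\<^sup>1\<close>, and two consecutive squares with the same relator would again give
  \<open>v\<^sub>i\<^sub>-\<^sub>1 = v\<^sub>i\<^sub>+\<^sub>1\<close>. The tree hypotheses are needed only for the path to exist.\<close>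

lemma freely_reduced_iff_successively:
  "freely_reduced w \<longleftrightarrow> successively (\<lambda>x y. \<not> (fst x = fst y \<and> snd x \<noteq> snd y)) w"
  unfolding freely_reduced_def successively_conv_nth by simp

lemma freely_reduced_singleton [simp]: "freely_reduced [x]"
  by (simp add: freely_reduced_iff_successively)

lemma freely_reduced_pair [simp]:
  "freely_reduced [x, y] \<longleftrightarrow> \<not> (fst x = fst y \<and> snd x \<noteq> snd y)"
  by (simp add: freely_reduced_iff_successively)

lemma successively_concat_map_upt:
  assumes "\<And>i. i < m \<Longrightarrow> f i \<noteq> [] \<and> successively P (f i)"
    and "\<And>i. Suc i < m \<Longrightarrow> P (last (f i)) (hd (f (Suc i)))"
  shows "successively P (concat (map f [0..<m]))"
  using assms
proof (induction m)
  case 0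
  then show ?case by simp
next
  case (Suc m)
  have IH: "successively P (concat (map f [0..<m]))"
    using Suc.IH Suc.prems less_SucI by blast
  have junction: "concat (map f [0..<m]) = [] \<or> P (last (concat (map f [0..<m]))) (hd (f m))"
  proof (cases m)
    case (Suc k)
    have "f k \<noteq> []" using Suc.prems(1)[of k] \<open>m = Suc k\<close> by simp
    then have "last (concat (map f [0..<m])) = last (f k)"
      using \<open>m = Suc k\<close> by simp
    then show ?thesis using Suc.prems(2)[of k] \<open>m = Suc k\<close> by simp
  qed simp
  have split: "concat (map f [0..<Suc m]) = concat (map f [0..<m]) @ f m" by simp
  show ?case
    unfolding split successively_append_iff using IH junction Suc.prems(1)[of m] by blast
qed

lemma freely_reduced_concat_map_upt:
  assumes "\<And>i. i < m \<Longrightarrow> f i \<noteq> [] \<and> freely_reduced (f i)"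
    and "\<And>i. Suc i < m \<Longrightarrow> freely_reduced [last (f i), hd (f (Suc i))]"
  shows "freely_reduced (concat (map f [0..<m]))"
  using assms unfolding freely_reduced_iff_successively
  by (intro successively_concat_map_upt) simp_all

lemma link_girth_ge_4_no_loop:
  assumes "link_girth_ge_4 E lam p q" "e \<in> E"
  shows "fst (link_edge lam p q e c) \<noteq> snd (link_edge lam p q e c)"
  using assms unfolding link_girth_ge_4_def by (metis (no_types))

lemma link_girth_ge_4_no_double_edge:
  assumes "link_girth_ge_4 E lam p q" "e \<in> E" "e' \<in> E" "(e, c) \<noteq> (e', c')"
  shows "{fst (link_edge lam p q e c), snd (link_edge lam p q e c)} \<noteq>
         {fst (link_edge lam p q e' c'), snd (link_edge lam p q e' c')}"
  using assms unfolding link_girth_ge_4_def by (metis (no_types))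

lemma link_girth_ge_4_bottom_ne:
  assumes "link_girth_ge_4 E lam p q" "e \<in> E"
  shows "q e \<noteq> lam e"
  using link_girth_ge_4_no_loop[OF assms, of CB] by (auto simp: link_edge_def)

lemma link_girth_ge_4_corner_Q_ne_R:
  assumes "link_girth_ge_4 E lam p q" "e \<in> E" "e' \<in> E"
  shows "\<not> (lam e = q e' \<and> p e = lam e')"
  using link_girth_ge_4_no_double_edge[OF assms, of CQ CR] by (auto simp: link_edge_def)

lemma link_girth_ge_4_corner_R_inj:
  assumes "link_girth_ge_4 E lam p q" "e \<in> E" "e' \<in> E" "q e = q e'" "lam e = lam e'"
  shows "e = e'"
  using link_girth_ge_4_no_double_edge[OF assms(1-3), of CR CR] assms(4,5)
  by (auto simp: link_edge_def)

text \<open>\<open>vs\<close> is the label sequence \<open>v\<^sub>0, \<dots>, v\<^sub>k\<close> of a simple path in \<open>L\<^sup>+\<close> and \<open>es ! i\<close> the relator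
  of the square \<open>C\<^sub>i\<^sub>+\<^sub>1\<close>.\<close>
definition fan_path :: "'e set \<Rightarrow> ('e \<Rightarrow> 'v) \<Rightarrow> ('e \<Rightarrow> 'v) \<Rightarrow> 'v list \<Rightarrow> 'e list \<Rightarrow> bool" where
  "fan_path E lam p vs es \<longleftrightarrow> distinct vs \<and> length es = length vs - 1 \<and>
     (\<forall>i < length es. es ! i \<in> E \<and> {p (es ! i), lam (es ! i)} = {vs ! i, vs ! Suc i})"

lemma fan_path_relator:
  assumes "fan_path E lam p vs es" "i < length es"
  shows "es ! i \<in> E" "{p (es ! i), lam (es ! i)} = {vs ! i, vs ! Suc i}"
  using assms unfolding fan_path_def by auto

lemma fan_path_nth_neq:
  assumes "fan_path E lam p vs es" "i < j" "j \<le> length es"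
  shows "vs ! i \<noteq> vs ! j"
  using assms unfolding fan_path_def by (simp add: nth_eq_iff_index_eq)

lemma fan_path_adjacent_neq:
  assumes "fan_path E lam p vs es" "i < length es"
  shows "vs ! i \<noteq> vs ! Suc i"
  using fan_path_nth_neq[OF assms(1), of i "Suc i"] assms(2) by simp

lemma fan_path_consecutive_relators_ne:
  assumes "fan_path E lam p vs es" "Suc i < length es"
  shows "es ! i \<noteq> es ! Suc i"
proof
  assume "es ! i = es ! Suc i"
  then have "{vs ! i, vs ! Suc i} = {vs ! Suc i, vs ! Suc (Suc i)}"
    using fan_path_relator(2)[OF assms(1), of i] fan_path_relator(2)[OF assms] assms(2)
    by simp
  moreover have "vs ! i \<noteq> vs ! Suc (Suc i)"
    using fan_path_nth_neq[OF assms(1)] assms(2) by simp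
  ultimately show False by (simp add: doubleton_eq_iff)
qed

lemma square_vword_cases:
  assumes "{p e, lam e} = {u, w}" "u \<noteq> w"
  obtains "u = lam e" "w = p e" "square_vword lam p q e u w = [(q e, False), (lam e, True)]"
    | "u = p e" "w = lam e" "square_vword lam p q e u w = [(lam e, False), (q e, True)]"
  using assms unfolding square_vword_def by (auto simp: doubleton_eq_iff)

lemma square_eword_cases:
  assumes "{p e, lam e} = {u, w}" "u \<noteq> w"
  obtains s where "square_eword lam p e u w = [(e, s)]"
  using assms unfolding square_eword_def by (auto simp: doubleton_eq_iff)

lemma erim_freely_reduced:
  assumes "fan_path E lam p vs es"
  shows "freely_reduced (erim lam p vs es)"
proof -
  define g where "g i = square_eword lam p (es ! i) (vs ! i) (vs ! Suc i)" for i
  have block: "\<exists>s. g i = [(es ! i, s)]" if "i < length es" for i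
    using fan_path_relator(2)[OF assms that] fan_path_adjacent_neq[OF assms that]
    unfolding g_def by (rule square_eword_cases[where lam = lam and p = p]) blast
  show ?thesis
    unfolding erim_def g_def[symmetric]
  proof (rule freely_reduced_concat_map_upt)
    show "g i \<noteq> [] \<and> freely_reduced (g i)" if "i < length es" for i
      using block[OF that] by auto
    show "freely_reduced [last (g i), hd (g (Suc i))]" if "Suc i < length es" for i
      using block[of i] block[of "Suc i"] that fan_path_consecutive_relators_ne[OF assms that]
      by auto
  qed
qed

lemma vrim_freely_reduced:
  assumes girth: "link_girth_ge_4 E lam p q" and fan: "fan_path E lam p vs es"
  shows "freely_reduced (vrim lam p q vs es)"
proof -
  define f where "f i = square_vword lam p q (es ! i) (vs ! i) (vs ! Suc i)" for i
  have orientation: thesis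
    if "i < length es"
      and "vs ! i = lam (es ! i) \<Longrightarrow> vs ! Suc i = p (es ! i) \<Longrightarrow>
           f i = [(q (es ! i), False), (lam (es ! i), True)] \<Longrightarrow> thesis"
      and "vs ! i = p (es ! i) \<Longrightarrow> vs ! Suc i = lam (es ! i) \<Longrightarrow>
           f i = [(lam (es ! i), False), (q (es ! i), True)] \<Longrightarrow> thesis"
    for i thesis
    using fan_path_relator(2)[OF fan that(1)] fan_path_adjacent_neq[OF fan that(1)]
    unfolding f_def
    by (rule square_vword_cases[where lam = lam and p = p and q = q and e = "es ! i"])
      (fact that(2,3)[unfolded f_def])+
  show ?thesis
    unfolding vrim_def f_def[symmetric]
  proof (rule freely_reduced_concat_map_upt)
    show "f i \<noteq> [] \<and> freely_reduced (f i)" if "i < length es" for i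
      using link_girth_ge_4_bottom_ne[OF girth fan_path_relator(1)[OF fan that]]
      by - (rule orientation[OF that], auto)
  next
    fix i assume i: "Suc i < length es"
    define e e' where "e = es ! i" and "e' = es ! Suc i"
    have in_E: "e \<in> E" "e' \<in> E"
      using fan_path_relator(1)[OF fan] i unfolding e_def e'_def by auto
    have "vs ! i \<noteq> vs ! Suc (Suc i)"
      using fan_path_nth_neq[OF fan] i by simp
    moreover have "e \<noteq> e'"
      using fan_path_consecutive_relators_ne[OF fan i] unfolding e_def e'_def .
    moreover note link_girth_ge_4_corner_Q_ne_R[OF girth in_E]
      link_girth_ge_4_corner_Q_ne_R[OF girth in_E(2,1)]
      link_girth_ge_4_corner_R_inj[OF girth in_E]
    moreover have "i < length es" using i by simp
    ultimately show "freely_reduced [last (f i), hd (f (Suc i))]"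
      unfolding e_def e'_def by - (rule orientation[of i]; rule orientation[OF i]; auto)
  qed
qed

lemma simple_path_plus_verts_distinct_labels:
  assumes "simple_path (plus_verts V) adj x y xs"
  shows "distinct (map fst xs)"
proof -
  have "inj_on fst (plus_verts V)" unfolding plus_verts_def inj_on_def by auto
  then show ?thesis
    using assms unfolding simple_path_def walk_in_def by (auto simp: distinct_map inj_on_subset)
qed

theorem mainTheorem2:
  fixes V :: "'v set" and E :: "'e set" and lam p q :: "'e \<Rightarrow> 'v"
    and a b :: 'v and xs :: "('v \<times> bool) list" and es :: "'e list"
  assumes "finite V" and "finite E"
    and "\<forall>e\<in>E. lam e \<in> V \<and> p e \<in> V \<and> q e \<in> V"
    and "link_girth_ge_4 E lam p q"
    and "graph_is_tree (plus_verts V) (link_adj E lam p q)"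
    and "graph_is_tree (minus_verts V) (link_adj E lam p q)"
    and "a \<in> V" and "b \<in> V" and "a \<noteq> b"
    and "simple_path (plus_verts V) (link_adj E lam p q) (a, True) (b, True) xs"
    and "length es = length xs - 1"
    and "\<forall>i < length es. es ! i \<in> E \<and>
           {p (es ! i), lam (es ! i)} = {fst (xs ! i), fst (xs ! Suc i)}"
  shows "freely_reduced (vrim lam p q (map fst xs) es) \<and>
         freely_reduced (erim lam p (map fst xs) es)"
proof -
  have "fan_path E lam p (map fst xs) es"
    unfolding fan_path_def
    using simple_path_plus_verts_distinct_labels[OF assms(10)] assms(11,12) by simp
  then show ?thesis
    using vrim_freely_reduced[OF assms(4)] erim_freely_reduced by blast
qed

end
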